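(* Let $\Sigma$ be a finite reduct of the label cover signature, $\mathbf P^\Sigma$ the $\Sigma$-reduct of the label cover template $\mathbf P$, and $\mathbf B$ a structure. If $\gamma$ is a gadget from $\Sigma$-structures to structures of the signature of $\mathbf B$ such that $\gamma(\mathbf P^\Sigma)\to\mathbf B$, then $\gamma(\mathbf S)\to\pi_{\mathbf B}(\mathbf S)$ for every $\Sigma$-structure $\mathbf S$.
   Context: Structures. A (multisorted relational) signature consists of types and relation symbols, each symbol $R$ having an arity $\mathrm{ar}_R$, a tuple of types. A structure $\mathbf A$ consists of a set $A_t$ per type and relations $R^{\mathbf A}\subseteq A_{\mathrm{ar}_R(1)}\times\dots\times A_{\mathrm{ar}_R(k)}$. A homomorphism is a type-preserving family of maps preserving all relations; write $\mathbf A\to\mathbf B$. For a finite set $X$, $\mathbf B^X$ has domains $B_t^X$ (maps $X\to B_t$) and $(b_1,\dots,b_m)\in R^{\mathbf B^X}$ iff $(b_1(i),\dots,b_m(i))\in R^{\mathbf B}$ for all $i\in X$. Label cover. The label cover signature has a type $X$ for each finite set $X$ and a binary symbol $E_\pi$ of arity $(X,Y)$ for each map $\pi\colon X\to Y$. The label cover template $\mathbf P$ has domain $P_X=X$ for each type $X$ and $E_\pi^{\mathbf P}=\{(x,\pi(x))\mid x\in X\}$. A finite reduct $\Sigma$ consists of finitely many of these types and finitely many of these symbols (with their types); the $\Sigma$-reduct of a structure keeps only the domains and relations named in $\Sigma$. Gadgets. A gadget $\gamma$ from $\Pi$- to $\Sigma'$-structures consists of a $\Sigma'$-structure $\mathbf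 D_t^\gamma$ for each $\Pi$-type $t$, a $\Sigma'$-structure $\mathbf R^\gamma$ for each $\Pi$-symbol $R$, and homomorphisms $p_{R,i}^\gamma\colon\mathbf D^\gamma_{\mathrm{ar}_R(i)}\to\mathbf R^\gamma$ for $i\in[k]$, $k$ the arity of $R$. $\gamma(\mathbf A)$: take a copy of $\mathbf D^\gamma_t$ for each $a\in A_t$ (elements $(a;d)$) and a copy of $\mathbf R^\gamma$ for each $a\in R^{\mathbf A}$ (elements $(a;e)$); identify $(a;p^\gamma_{R,i}(e))$ with $(a_i;e)$ for all $a\in R^{\mathbf A}$, $i$, $e$; output the quotient by the generated equivalence relation with relations the images. Universal gadget. For a structure $\mathbf B$ and a structure $\mathbf S$ in (a reduct of) the label cover signature, $\pi_{\mathbf B}(\mathbf S)$ is obtained by taking a copy of $\mathbf B^X$ for each element $s$ of type $X$ (elements $(s;b)$, $b\colon X\to B_t$), identifying $(s;b\circ\sigma)$ with $(t;b)$ for each $(s,t)\in E_\sigma^{\mathbf S}$ with $\sigma\colon X\to Y$ and each $b\colon Y\to B_u$, and taking the quotient by the generated equivalence relation, with relations the images of those of the copies. *)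

theory Defs
  imports Main "HOL-Library.FuncSet"
begin

text \<open>A signature is given by a set of types Ty, a set of relation symbols Sy and an
  arity function ar (a list of types per symbol).\<close>

record ('t, 'r, 'e) mstruct =
  sdom :: "'t \<Rightarrow> 'e set"
  srel :: "'r \<Rightarrow> 'e list set"

definition wf_sig :: "'t set \<Rightarrow> 'r set \<Rightarrow> ('r \<Rightarrow> 't list) \<Rightarrow> bool" where
  "wf_sig Ty Sy ar \<longleftrightarrow> (\<forall>R\<in>Sy. set (ar R) \<subseteq> Ty)"

definition wf_struct :: "'t set \<Rightarrow> 'r set \<Rightarrow> ('r \<Rightarrow> 't list) \<Rightarrow> ('t, 'r, 'e) mstruct \<Rightarrow> bool" where
  "wf_struct Ty Sy ar A \<longleftrightarrow>
     (\<forall>R\<in>Sy. \<forall>as\<in>srel A R. length as = length (ar R) \<and>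
                (\<forall>i<length as. as ! i \<in> sdom A (ar R ! i)))"

definition hom :: "'t set \<Rightarrow> 'r set \<Rightarrow> ('r \<Rightarrow> 't list) \<Rightarrow> ('t, 'r, 'a) mstruct \<Rightarrow>
    ('t, 'r, 'b) mstruct \<Rightarrow> ('t \<Rightarrow> 'a \<Rightarrow> 'b) \<Rightarrow> bool" where
  "hom Ty Sy ar A B h \<longleftrightarrow>
     (\<forall>t\<in>Ty. \<forall>a\<in>sdom A t. h t a \<in> sdom B t) \<and>
     (\<forall>R\<in>Sy. \<forall>as\<in>srel A R. map2 h (ar R) as \<in> srel B R)"

definition eqgen :: "('e \<times> 'e) set \<Rightarrow> ('e \<times> 'e) set" where
  "eqgen G = (G \<union> G\<inverse>)\<^sup>*"

definition quot_struct :: "('t, 'r, 'e) mstruct \<Rightarrow> ('e \<times> 'e) set \<Rightarrow> ('t, 'r, 'e set) mstruct" where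
  "quot_struct A G =
     \<lparr> sdom = (\<lambda>t. (\<lambda>a. eqgen G `` {a}) ` sdom A t),
       srel = (\<lambda>R. map (\<lambda>a. eqgen G `` {a}) ` srel A R) \<rparr>"

text \<open>A gadget from (Ty1,Sy1,ar1)-structures to (Ty2,Sy2,ar2)-structures: structures gD t,
  gR R and maps gp R i (a type-indexed family) for the homomorphisms p_{R,i}.
  Indices i are 0-based.\<close>

record ('t1, 'r1, 't2, 'r2, 'd, 'e) gadget =
  gD :: "'t1 \<Rightarrow> ('t2, 'r2, 'd) mstruct"
  gR :: "'r1 \<Rightarrow> ('t2, 'r2, 'e) mstruct"
  gp :: "'r1 \<Rightarrow> nat \<Rightarrow> 't2 \<Rightarrow> 'd \<Rightarrow> 'e"

definition is_gadget :: "'t1 set \<Rightarrow> 'r1 set \<Rightarrow> ('r1 \<Rightarrow> 't1 list) \<Rightarrow>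
    't2 set \<Rightarrow> 'r2 set \<Rightarrow> ('r2 \<Rightarrow> 't2 list) \<Rightarrow> ('t1, 'r1, 't2, 'r2, 'd, 'e) gadget \<Rightarrow> bool" where
  "is_gadget Ty1 Sy1 ar1 Ty2 Sy2 ar2 g \<longleftrightarrow>
     (\<forall>t\<in>Ty1. wf_struct Ty2 Sy2 ar2 (gD g t)) \<and>
     (\<forall>R\<in>Sy1. wf_struct Ty2 Sy2 ar2 (gR g R) \<and>
        (\<forall>i<length (ar1 R). hom Ty2 Sy2 ar2 (gD g (ar1 R ! i)) (gR g R) (gp g R i)))"

text \<open>Elements of the disjoint union before gluing: Inl (t,a,u,d) is the copy of the element
  d (of type u) of gD t attached to a \<in> A_t; Inr (R,as,u,e) is the copy of e (of type u) of
  gR R attached to the tuple as \<in> R^A.\<close>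

definition gadget_pre :: "'t1 set \<Rightarrow> 'r1 set \<Rightarrow> ('r2 \<Rightarrow> 't2 list) \<Rightarrow>
    ('t1, 'r1, 't2, 'r2, 'd, 'e) gadget \<Rightarrow> ('t1, 'r1, 'a) mstruct \<Rightarrow>
    ('t2, 'r2, ('t1 \<times> 'a \<times> 't2 \<times> 'd) + ('r1 \<times> 'a list \<times> 't2 \<times> 'e)) mstruct" where
  "gadget_pre Ty1 Sy1 ar2 g A =
    \<lparr> sdom = (\<lambda>u. {Inl (t, a, u, d) | t a d. t \<in> Ty1 \<and> a \<in> sdom A t \<and> d \<in> sdom (gD g t) u}
               \<union> {Inr (R, as, u, e) | R as e. R \<in> Sy1 \<and> as \<in> srel A R \<and> e \<in> sdom (gR g R) u}),
      srel = (\<lambda>S. {map2 (\<lambda>u d. Inl (t, a, u, d)) (ar2 S) ds | t a ds.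
                      t \<in> Ty1 \<and> a \<in> sdom A t \<and> ds \<in> srel (gD g t) S}
               \<union> {map2 (\<lambda>u e. Inr (R, as, u, e)) (ar2 S) es | R as es.
                      R \<in> Sy1 \<and> as \<in> srel A R \<and> es \<in> srel (gR g R) S}) \<rparr>"

definition gadget_gen :: "'r1 set \<Rightarrow> ('r1 \<Rightarrow> 't1 list) \<Rightarrow> 't2 set \<Rightarrow>
    ('t1, 'r1, 't2, 'r2, 'd, 'e) gadget \<Rightarrow> ('t1, 'r1, 'a) mstruct \<Rightarrow>
    ((('t1 \<times> 'a \<times> 't2 \<times> 'd) + ('r1 \<times> 'a list \<times> 't2 \<times> 'e)) \<times>
     (('t1 \<times> 'a \<times> 't2 \<times> 'd) + ('r1 \<times> 'a list \<times> 't2 \<times> 'e))) set" where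
  "gadget_gen Sy1 ar1 Ty2 g A =
    {(Inr (R, as, u, gp g R i u d), Inl (ar1 R ! i, as ! i, u, d)) | R as i u d.
       R \<in> Sy1 \<and> as \<in> srel A R \<and> i < length (ar1 R) \<and> u \<in> Ty2 \<and>
       d \<in> sdom (gD g (ar1 R ! i)) u}"

definition gadget_apply :: "'t1 set \<Rightarrow> 'r1 set \<Rightarrow> ('r1 \<Rightarrow> 't1 list) \<Rightarrow>
    't2 set \<Rightarrow> ('r2 \<Rightarrow> 't2 list) \<Rightarrow>
    ('t1, 'r1, 't2, 'r2, 'd, 'e) gadget \<Rightarrow> ('t1, 'r1, 'a) mstruct \<Rightarrow>
    ('t2, 'r2, (('t1 \<times> 'a \<times> 't2 \<times> 'd) + ('r1 \<times> 'a list \<times> 't2 \<times> 'e)) set) mstruct" where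
  "gadget_apply Ty1 Sy1 ar1 Ty2 ar2 g A =
     quot_struct (gadget_pre Ty1 Sy1 ar2 g A) (gadget_gen Sy1 ar1 Ty2 g A)"

text \<open>Types of the label cover signature are finite sets X (of elements of type 'x);
  the symbol E_pi for pi : X \<rightarrow> Y is the triple (X, Y, pi), with pi extensional.\<close>

type_synonym 'x lcsym = "'x set \<times> 'x set \<times> ('x \<Rightarrow> 'x)"

definition lc_ar :: "'x lcsym \<Rightarrow> 'x set list" where
  "lc_ar s = (case s of (X, Y, f) \<Rightarrow> [X, Y])"

definition lc_finite_reduct :: "'x set set \<Rightarrow> 'x lcsym set \<Rightarrow> bool" where
  "lc_finite_reduct Ty Sy \<longleftrightarrow> finite Ty \<and> finite Sy \<and> (\<forall>X\<in>Ty. finite X) \<and>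
     (\<forall>(X, Y, f)\<in>Sy. X \<in> Ty \<and> Y \<in> Ty \<and> f \<in> X \<rightarrow>\<^sub>E Y)"

definition lc_template_reduct :: "'x set set \<Rightarrow> 'x lcsym set \<Rightarrow> ('x set, 'x lcsym, 'x) mstruct" where
  "lc_template_reduct Ty Sy =
    \<lparr> sdom = (\<lambda>X. if X \<in> Ty then X else {}),
      srel = (\<lambda>s. if s \<in> Sy then (case s of (X, Y, f) \<Rightarrow> {[x, f x] | x. x \<in> X}) else {}) \<rparr>"

definition pow_struct :: "('r \<Rightarrow> 't list) \<Rightarrow> ('t, 'r, 'b) mstruct \<Rightarrow> 'x set \<Rightarrow>
    ('t, 'r, 'x \<Rightarrow> 'b) mstruct" where
  "pow_struct ar B X =
    \<lparr> sdom = (\<lambda>u. X \<rightarrow>\<^sub>E sdom B u),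
      srel = (\<lambda>R. {bs. length bs = length (ar R) \<and>
                       (\<forall>j<length bs. bs ! j \<in> X \<rightarrow>\<^sub>E sdom B (ar R ! j)) \<and>
                       (\<forall>x\<in>X. map (\<lambda>b. b x) bs \<in> srel B R)}) \<rparr>"

text \<open>Element (X, s, u, b): the element b \<in> B_u^X of the copy of B^X attached to s \<in> S_X.\<close>

definition univ_pre :: "'x set set \<Rightarrow> ('r \<Rightarrow> 't list) \<Rightarrow> ('t, 'r, 'b) mstruct \<Rightarrow>
    ('x set, 'x lcsym, 's) mstruct \<Rightarrow> ('t, 'r, 'x set \<times> 's \<times> 't \<times> ('x \<Rightarrow> 'b)) mstruct" where
  "univ_pre Ty ar B S =
    \<lparr> sdom = (\<lambda>u. {(X, s, u, b) | X s b. X \<in> Ty \<and> s \<in> sdom S X \<and> b \<in> X \<rightarrow>\<^sub>E sdom B u}),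
      srel = (\<lambda>R. {map2 (\<lambda>u b. (X, s, u, b)) (ar R) bs | X s bs.
                      X \<in> Ty \<and> s \<in> sdom S X \<and> bs \<in> srel (pow_struct ar B X) R}) \<rparr>"

definition univ_gen :: "'x lcsym set \<Rightarrow> 't set \<Rightarrow> ('t, 'r, 'b) mstruct \<Rightarrow>
    ('x set, 'x lcsym, 's) mstruct \<Rightarrow>
    (('x set \<times> 's \<times> 't \<times> ('x \<Rightarrow> 'b)) \<times> ('x set \<times> 's \<times> 't \<times> ('x \<Rightarrow> 'b))) set" where
  "univ_gen Sy Ty2 B S =
    {((X, s, u, restrict (b \<circ> f) X), (Y, t, u, b)) | X Y f s t u b.
       (X, Y, f) \<in> Sy \<and> [s, t] \<in> srel S (X, Y, f) \<and> u \<in> Ty2 \<and> b \<in> Y \<rightarrow>\<^sub>E sdom B u}"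

definition univ_gadget :: "'x set set \<Rightarrow> 'x lcsym set \<Rightarrow> 't set \<Rightarrow> ('r \<Rightarrow> 't list) \<Rightarrow>
    ('t, 'r, 'b) mstruct \<Rightarrow> ('x set, 'x lcsym, 's) mstruct \<Rightarrow>
    ('t, 'r, ('x set \<times> 's \<times> 't \<times> ('x \<Rightarrow> 'b)) set) mstruct" where
  "univ_gadget Ty Sy Ty2 ar B S = quot_struct (univ_pre Ty ar B S) (univ_gen Sy Ty2 B S)"

end

theory Submission
  imports Defs
begin

(* A homomorphism h from \<gamma>(P^\<Sigma>) to B is transposed into a map from \<gamma>(S) to \<pi>_B(S):
   an element (s; d) of the copy of D_X over s \<in> S_X goes to the element x \<mapsto> h(x; d) of the
   copy of B^X over s, and an element (s, t; e) of the copy of the gadget of E_\<pi> goes to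
   x \<mapsto> h((x, \<pi> x); e) over s. On every copy this is a composite of homomorphisms into a
   power of B, so it preserves relations. It also respects the gluing of \<gamma>(S): gluing along
   the first coordinate of E_\<pi> is matched by the same gluing in \<gamma>(P^\<Sigma>), gluing along the
   second one by the identification (s; b \<circ> \<pi>) ~ (t; b) in \<pi>_B(S). *)

lemma map2_map2: "map2 g xs (map2 f xs ys) = map2 (\<lambda>x y. g x (f x y)) xs ys"
  by (rule nth_equalityI) auto

lemma map2_map: "map2 g xs (map f ys) = map2 (\<lambda>x y. g x (f y)) xs ys"
  by (rule nth_equalityI) auto

lemma eqgen_equiv: "equiv UNIV (eqgen G)"
  unfolding eqgen_def
  by (intro equivI refl_rtrancl trans_rtrancl sym_rtrancl) (auto simp: sym_def)

lemma eqgen_generator: "(a, b) \<in> G \<Longrightarrow> (a, b) \<in> eqgen G"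
  by (auto simp: eqgen_def)

lemma eqgen_class_eq: "(a, b) \<in> eqgen G \<Longrightarrow> eqgen G `` {a} = eqgen G `` {b}"
  by (rule equiv_class_eq[OF eqgen_equiv])

lemma eqgen_respects:
  assumes "\<And>a b. (a, b) \<in> G \<Longrightarrow> F a = F b" and "(a, b) \<in> eqgen G"
  shows "F a = F b"
  using assms(2) unfolding eqgen_def
  by (induction rule: rtrancl_induct) (auto dest: assms(1))

lemma hom_comp:
  assumes "hom Ty Sy ar A B f" and "hom Ty Sy ar B C g"
  shows "hom Ty Sy ar A C (\<lambda>t a. g t (f t a))"
  using assms unfolding hom_def by (metis map2_map2)

lemma hom_quot_struct_class:
  assumes "wf_struct Ty Sy ar A"
  shows "hom Ty Sy ar A (quot_struct A G) (\<lambda>_ a. eqgen G `` {a})"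
proof -
  have "map2 (\<lambda>_ a. eqgen G `` {a}) (ar R) as = map (\<lambda>a. eqgen G `` {a}) as"
    if "R \<in> Sy" "as \<in> srel A R" for R as
    using assms that unfolding wf_struct_def by (intro nth_equalityI) auto
  then show ?thesis
    unfolding hom_def quot_struct_def by auto
qed

lemma hom_quot_struct_factor:
  assumes hom: "hom Ty Sy ar A C F" and resp: "\<And>u a b. (a, b) \<in> G \<Longrightarrow> F u a = F u b"
  shows "\<exists>h. hom Ty Sy ar (quot_struct A G) C h"
proof
  define cls where "cls = (\<lambda>a. eqgen G `` {a})"
  define h where "h u K = F u (SOME a. a \<in> K)" for u K
  have h_cls: "h u (cls a) = F u a" for u a
  proof -
    have "a \<in> cls a"
      by (simp add: cls_def eqgen_def)
    then have "(a, SOME b. b \<in> cls a) \<in> eqgen G"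
      by (metis Image_singleton_iff cls_def someI)
    then show ?thesis
      unfolding h_def by (metis eqgen_respects resp)
  qed
  have "sdom (quot_struct A G) u = cls ` sdom A u" "srel (quot_struct A G) R = map cls ` srel A R"
    for u R by (simp_all add: quot_struct_def cls_def)
  then show "hom Ty Sy ar (quot_struct A G) C h"
    using hom unfolding hom_def by (auto simp: h_cls map2_map)
qed

lemma hom_pow_structI:
  assumes "wf_sig Ty Sy ar" and "wf_struct Ty Sy ar A"
    and "\<And>x. x \<in> X \<Longrightarrow> hom Ty Sy ar A B (k x)"
  shows "hom Ty Sy ar A (pow_struct ar B X) (\<lambda>u a. \<lambda>x\<in>X. k x u a)"
  unfolding hom_def
proof (intro conjI ballI)
  fix u a assume "u \<in> Ty" "a \<in> sdom A u"
  then show "(\<lambda>x\<in>X. k x u a) \<in> sdom (pow_struct ar B X) u"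
    using assms(3) by (auto simp: pow_struct_def hom_def)
next
  fix R as assume R: "R \<in> Sy" and as: "as \<in> srel A R"
  have len: "length as = length (ar R)"
    and as_dom: "\<And>j. j < length as \<Longrightarrow> as ! j \<in> sdom A (ar R ! j)"
    using assms(2) R as unfolding wf_struct_def by auto
  have ar_Ty: "\<And>j. j < length (ar R) \<Longrightarrow> ar R ! j \<in> Ty"
    using assms(1) R unfolding wf_sig_def by (auto dest!: nth_mem)
  let ?bs = "map2 (\<lambda>u a. \<lambda>x\<in>X. k x u a) (ar R) as"
  have "?bs ! j \<in> X \<rightarrow>\<^sub>E sdom B (ar R ! j)" if "j < length ?bs" for j
    using that assms(3) as_dom ar_Ty len by (auto simp: hom_def)
  moreover have "map (\<lambda>b. b x) ?bs \<in> srel B R" if "x \<in> X" for x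
  proof -
    have "map (\<lambda>b. b x) ?bs = map2 (k x) (ar R) as"
      using that by (intro nth_equalityI) auto
    moreover have "map2 (k x) (ar R) as \<in> srel B R"
      using assms(3)[OF that] R as unfolding hom_def by auto
    ultimately show ?thesis
      by (simp only:)
  qed
  ultimately show "?bs \<in> srel (pow_struct ar B X) R"
    using len by (simp add: pow_struct_def)
qed

lemma hom_gadget_pre_Inl:
  assumes "t \<in> Ty1" and "a \<in> sdom A t"
  shows "hom Ty2 Sy2 ar2 (gD g t) (gadget_pre Ty1 Sy1 ar2 g A) (\<lambda>u d. Inl (t, a, u, d))"
  using assms unfolding hom_def gadget_pre_def by auto

lemma hom_gadget_pre_Inr:
  assumes "R \<in> Sy1" and "as \<in> srel A R"
  shows "hom Ty2 Sy2 ar2 (gR g R) (gadget_pre Ty1 Sy1 ar2 g A) (\<lambda>u e. Inr (R, as, u, e))"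
  using assms unfolding hom_def gadget_pre_def by auto

lemma hom_gadget_preI:
  assumes "\<And>t a. t \<in> Ty1 \<Longrightarrow> a \<in> sdom A t \<Longrightarrow>
      hom Ty2 Sy2 ar2 (gD g t) C (\<lambda>u d. F u (Inl (t, a, u, d)))"
    and "\<And>R as. R \<in> Sy1 \<Longrightarrow> as \<in> srel A R \<Longrightarrow>
      hom Ty2 Sy2 ar2 (gR g R) C (\<lambda>u e. F u (Inr (R, as, u, e)))"
  shows "hom Ty2 Sy2 ar2 (gadget_pre Ty1 Sy1 ar2 g A) C F"
  using assms unfolding hom_def gadget_pre_def by (auto simp: map2_map2)

lemma wf_struct_gadget_pre:
  assumes "is_gadget Ty1 Sy1 ar1 Ty2 Sy2 ar2 g"
  shows "wf_struct Ty2 Sy2 ar2 (gadget_pre Ty1 Sy1 ar2 g A)"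
  using assms unfolding is_gadget_def wf_struct_def gadget_pre_def by fastforce

lemma hom_univ_pre_copy:
  assumes "X \<in> Ty" and "s \<in> sdom S X"
  shows "hom Ty2 Sy2 ar (pow_struct ar B X) (univ_pre Ty ar B S) (\<lambda>u b. (X, s, u, b))"
  using assms unfolding hom_def univ_pre_def by (auto simp: pow_struct_def)

lemma wf_struct_univ_pre: "wf_struct Ty2 Sy2 ar (univ_pre Ty ar B S)"
  unfolding wf_struct_def univ_pre_def by (auto simp: pow_struct_def)

lemma sdom_lc_template_reduct [simp]: "X \<in> Ty \<Longrightarrow> sdom (lc_template_reduct Ty Sy) X = X"
  by (simp add: lc_template_reduct_def)

lemma srel_lc_template_reduct:
  "(X, Y, f) \<in> Sy \<Longrightarrow> x \<in> X \<Longrightarrow> [x, f x] \<in> srel (lc_template_reduct Ty Sy) (X, Y, f)"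
  by (auto simp: lc_template_reduct_def)

lemma lc_srel_pairE:
  assumes "lc_finite_reduct Ty Sy" and "wf_struct Ty Sy lc_ar S"
    and "R \<in> Sy" and "as \<in> srel S R"
  obtains X Y f s t where "R = (X, Y, f)" and "as = [s, t]" and "X \<in> Ty" and "Y \<in> Ty"
    and "f \<in> X \<rightarrow>\<^sub>E Y" and "s \<in> sdom S X" and "t \<in> sdom S Y"
proof -
  obtain X Y f where R: "R = (X, Y, f)"
    by (cases R) auto
  have "length as = 2" and as_dom: "\<forall>j<length as. as ! j \<in> sdom S ([X, Y] ! j)"
    using assms(2-4) R unfolding wf_struct_def lc_ar_def by auto
  then obtain s t where "as = [s, t]"
    by (auto simp: numeral_2_eq_2 length_Suc_conv)
  moreover have "X \<in> Ty" "Y \<in> Ty" "f \<in> X \<rightarrow>\<^sub>E Y"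
    using assms(1,3) R unfolding lc_finite_reduct_def by auto
  moreover have "s \<in> sdom S X" "t \<in> sdom S Y"
    using as_dom[rule_format, of 0] as_dom[rule_format, of 1] \<open>as = [s, t]\<close> by simp_all
  ultimately show thesis
    using that R by blast
qed

definition lc_transpose ::
    "('t \<Rightarrow> ('x set \<times> 'x \<times> 't \<times> 'd) + ('x lcsym \<times> 'x list \<times> 't \<times> 'e) \<Rightarrow> 'b) \<Rightarrow>
     ('x set \<times> 's \<times> 't \<times> 'd) + ('x lcsym \<times> 's list \<times> 't \<times> 'e) \<Rightarrow>
     'x set \<times> 's \<times> 't \<times> ('x \<Rightarrow> 'b)" where
  "lc_transpose k p = (case p of
      Inl (X, s, u, d) \<Rightarrow> (X, s, u, \<lambda>x\<in>X. k u (Inl (X, x, u, d)))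
    | Inr ((X, Y, f), as, u, e) \<Rightarrow> (X, hd as, u, \<lambda>x\<in>X. k u (Inr ((X, Y, f), [x, f x], u, e))))"

lemma hom_lc_transpose:
  assumes lc: "lc_finite_reduct Ty Sy" and sig: "wf_sig Ty2 Sy2 ar2"
    and gad: "is_gadget Ty Sy lc_ar Ty2 Sy2 ar2 g" and S: "wf_struct Ty Sy lc_ar S"
    and k: "hom Ty2 Sy2 ar2 (gadget_pre Ty Sy ar2 g (lc_template_reduct Ty Sy)) B k"
  shows "hom Ty2 Sy2 ar2 (gadget_pre Ty Sy ar2 g S) (univ_pre Ty ar2 B S) (\<lambda>_. lc_transpose k)"
proof (rule hom_gadget_preI)
  fix X s assume X: "X \<in> Ty" and s: "s \<in> sdom S X"
  have "hom Ty2 Sy2 ar2 (gD g X) (pow_struct ar2 B X) (\<lambda>u d. \<lambda>x\<in>X. k u (Inl (X, x, u, d)))"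
    using gad X by (intro hom_pow_structI sig hom_comp[OF hom_gadget_pre_Inl k]) (auto simp: is_gadget_def)
  from hom_comp[OF this hom_univ_pre_copy[OF X s]]
  show "hom Ty2 Sy2 ar2 (gD g X) (univ_pre Ty ar2 B S) (\<lambda>u d. lc_transpose k (Inl (X, s, u, d)))"
    by (simp add: lc_transpose_def)
next
  fix R as assume R: "R \<in> Sy" and as: "as \<in> srel S R"
  then obtain X Y f s t where R_eq: "R = (X, Y, f)" and as_eq: "as = [s, t]"
    and X: "X \<in> Ty" and s: "s \<in> sdom S X"
    using lc S by (elim lc_srel_pairE) auto
  have "hom Ty2 Sy2 ar2 (gR g R) (pow_struct ar2 B X)
      (\<lambda>u e. \<lambda>x\<in>X. k u (Inr ((X, Y, f), [x, f x], u, e)))"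
    using gad R unfolding R_eq
    by (intro hom_pow_structI sig hom_comp[OF hom_gadget_pre_Inr k])
      (auto simp: is_gadget_def srel_lc_template_reduct)
  from hom_comp[OF this hom_univ_pre_copy[OF X s]]
  show "hom Ty2 Sy2 ar2 (gR g R) (univ_pre Ty ar2 B S) (\<lambda>u e. lc_transpose k (Inr (R, as, u, e)))"
    by (simp add: lc_transpose_def R_eq as_eq)
qed

lemma lc_transpose_glue:
  assumes lc: "lc_finite_reduct Ty Sy" and S: "wf_struct Ty Sy lc_ar S"
    and k: "hom Ty2 Sy2 ar2 (gadget_pre Ty Sy ar2 g (lc_template_reduct Ty Sy)) B k"
    and k_glue: "\<And>u p q. (p, q) \<in> gadget_gen Sy lc_ar Ty2 g (lc_template_reduct Ty Sy) \<Longrightarrow>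
      k u p = k u q"
    and pq: "(p, q) \<in> gadget_gen Sy lc_ar Ty2 g S"
  shows "(lc_transpose k p, lc_transpose k q) \<in> eqgen (univ_gen Sy Ty2 B S)"
proof -
  obtain R as i u d where p: "p = Inr (R, as, u, gp g R i u d)"
    and q: "q = Inl (lc_ar R ! i, as ! i, u, d)"
    and R: "R \<in> Sy" "as \<in> srel S R" and i: "i < length (lc_ar R)" and u: "u \<in> Ty2"
    and d: "d \<in> sdom (gD g (lc_ar R ! i)) u"
    using pq unfolding gadget_gen_def by blast
  obtain X Y f s t where R_eq: "R = (X, Y, f)" and as_eq: "as = [s, t]"
    and Y: "Y \<in> Ty" and f: "f \<in> X \<rightarrow>\<^sub>E Y"
    using lc S R by (elim lc_srel_pairE) auto
  have glue: "k u (Inr ((X, Y, f), [x, f x], u, gp g (X, Y, f) i u d)) =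
      k u (Inl ([X, Y] ! i, [x, f x] ! i, u, d))" if "x \<in> X" for x
    using that R(1) i u d
    by (intro k_glue) (auto simp: gadget_gen_def R_eq lc_ar_def srel_lc_template_reduct)
  have "i = 0 \<or> i = 1"
    using i by (auto simp: R_eq lc_ar_def)
  then show ?thesis
  proof
    assume "i = 0"
    then have "lc_transpose k p = lc_transpose k q"
      using glue by (auto simp: p q R_eq as_eq lc_transpose_def lc_ar_def intro: restrict_ext)
    then show ?thesis
      by (simp add: eqgen_def)
  next
    assume i1: "i = 1"
    define b where "b = (\<lambda>y\<in>Y. k u (Inl (Y, y, u, d)))"
    have "lc_transpose k p = (X, s, u, restrict (b \<circ> f) X)"
      using glue f by (auto simp: p R_eq as_eq i1 b_def lc_transpose_def intro!: restrict_ext)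
    moreover have "lc_transpose k q = (Y, t, u, b)"
      by (simp add: q R_eq as_eq i1 b_def lc_ar_def lc_transpose_def)
    moreover have "b \<in> Y \<rightarrow>\<^sub>E sdom B u"
      using hom_comp[OF hom_gadget_pre_Inl k] Y d u
      by (auto simp: b_def hom_def R_eq i1 lc_ar_def)
    ultimately show ?thesis
      using R u unfolding eqgen_def univ_gen_def R_eq as_eq by blast
  qed
qed

theorem mainTheorem16:
  fixes Ty :: "'x set set" and Sy :: "'x lcsym set"
    and Ty2 :: "'t set" and Sy2 :: "'r set" and ar2 :: "'r \<Rightarrow> 't list"
    and B :: "('t, 'r, 'b) mstruct"
    and g :: "('x set, 'x lcsym, 't, 'r, 'd, 'e) gadget"
    and S :: "('x set, 'x lcsym, 's) mstruct"
  assumes "lc_finite_reduct Ty Sy"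
    and "wf_sig Ty2 Sy2 ar2"
    and "wf_struct Ty2 Sy2 ar2 B"
    and "is_gadget Ty Sy lc_ar Ty2 Sy2 ar2 g"
    and "\<exists>h. hom Ty2 Sy2 ar2 (gadget_apply Ty Sy lc_ar Ty2 ar2 g (lc_template_reduct Ty Sy)) B h"
    and "wf_struct Ty Sy lc_ar S"
  shows "\<exists>h. hom Ty2 Sy2 ar2 (gadget_apply Ty Sy lc_ar Ty2 ar2 g S) (univ_gadget Ty Sy Ty2 ar2 B S) h"
proof -
  let ?P = "lc_template_reduct Ty Sy"
  obtain h where h: "hom Ty2 Sy2 ar2
      (quot_struct (gadget_pre Ty Sy ar2 g ?P) (gadget_gen Sy lc_ar Ty2 g ?P)) B h"
    using assms(5) unfolding gadget_apply_def by blast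
  define k where "k u p = h u (eqgen (gadget_gen Sy lc_ar Ty2 g ?P) `` {p})" for u p
  have k: "hom Ty2 Sy2 ar2 (gadget_pre Ty Sy ar2 g ?P) B k"
    using hom_comp[OF hom_quot_struct_class[OF wf_struct_gadget_pre[OF assms(4)]] h]
    unfolding k_def .
  have k_glue: "k u p = k u q" if "(p, q) \<in> gadget_gen Sy lc_ar Ty2 g ?P" for u p q
    unfolding k_def using eqgen_class_eq[OF eqgen_generator[OF that]] by simp
  let ?cls = "\<lambda>a. eqgen (univ_gen Sy Ty2 B S) `` {a}"
  have "hom Ty2 Sy2 ar2 (gadget_pre Ty Sy ar2 g S) (univ_gadget Ty Sy Ty2 ar2 B S)
      (\<lambda>_ p. ?cls (lc_transpose k p))"
    using hom_comp[OF hom_lc_transpose[OF assms(1,2,4,6) k] hom_quot_struct_class[OF wf_struct_univ_pre]]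
    unfolding univ_gadget_def .
  moreover have "?cls (lc_transpose k p) = ?cls (lc_transpose k q)"
    if "(p, q) \<in> gadget_gen Sy lc_ar Ty2 g S" for p q
    using lc_transpose_glue[OF assms(1,6) k k_glue that] by (rule eqgen_class_eq)
  ultimately show ?thesis
    unfolding gadget_apply_def by (rule hom_quot_struct_factor)
qed

end
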